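(* For every $(G,r,T,a,b)$ with $0\le a\le 1/2$ and $b\in[0,1]$, there is a coupling of the spread process $\{f_t(v)\}$ with parameters $(G,r,T,a,b)$ and the decoupled process $(g,Z,\mathrm{count},\mathrm{origin})$ with parameters $(G,r,T,\alpha=2a,\beta=b)$ such that $g_t(v)=f_t(v)$ for all $t\in\mathbb{N}$ and all $v\in V$.
   Context: Spread process. Fix $a,b\in[0,1]$. Let $G=(V,E)$ be a connected, locally finite, undirected graph, $r\in V$ a root, and $T$ a BFS spanning tree of $G$ rooted at $r$ (i.e. $d_T(r,v)=d_G(r,v)$ for all $v$), oriented away from $r$, with parent $p(v)$ for $v\ne r$. The spread process with parameters $(G,r,T,a,b)$ is the random sequence $f_t:V\to\{+1,-1,\bot\}$: $f_t(r)=+1$ for all $t$; $f_0(v)=\bot$ for $v\ne r$; for $t\ge1$ and each $v\ne r$ independently: if $f_{t-1}(v)=\bot\ne f_{t-1}(p(v))$ then $f_t(v)=f_{t-1}(p(v))$ w.p. $1-a$ and $-f_{t-1}(p(v))$ w.p. $a$; if $f_{t-1}(v)\ne\bot$ then $f_t(v)=f_{t-1}(p(v))$ w.p. $b$ and $f_{t-1}(v)$ w.p. $1-b$; if $f_{t-1}(v)=f_{t-1}(p(v))=\bot$ then $f_t(v)=\bot$. Decoupled process with parameters $(G,r,T,\alpha,\beta)$: $Z_0=+1$, $Z_1,Z_2,\dots$ i.i.d. uniform on $\{-1,+1\}$, $Z_\infty=\bot$; counter $\mathrm{count}_0=1$; $\mathrm{origin}_0(r)=0$, $\mathrm{origin}_0(v)=\infty$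 for $v\ne r$, and the root always has origin $0$; $g_t(v)=Z_{\mathrm{origin}_t(v)}$. Update from $t$ to $t+1$ (independent choices): if $g_t(v)=g_t(p(v))=\bot$ then $\mathrm{origin}_{t+1}(v)=\infty$; nodes with $g_t(v)=\bot\ne g_t(p(v))$ are processed sequentially: w.p. $1-\alpha$, $\mathrm{origin}_{t+1}(v)=\mathrm{origin}_t(p(v))$; w.p. $\alpha$, $\mathrm{origin}_{t+1}(v)$ is the current counter value, and the counter is then incremented; if $g_t(v)\ne\bot$, $v\ne r$, then w.p. $\beta$, $\mathrm{origin}_{t+1}(v)=\mathrm{origin}_t(p(v))$, else it is unchanged. *)

theory Defs
  imports "HOL-Probability.Probability"
begin

datatype sv = Plus | Minus | Bot

fun sv_neg :: "sv \<Rightarrow> sv" where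
  "sv_neg Plus = Minus" | "sv_neg Minus = Plus" | "sv_neg Bot = Bot"

definition gdist :: "('v \<Rightarrow> 'v \<Rightarrow> bool) \<Rightarrow> 'v \<Rightarrow> 'v \<Rightarrow> nat" where
  "gdist E u v = (LEAST n. (E ^^ n) u v)"

definition conn_lf_graph :: "('v \<Rightarrow> 'v \<Rightarrow> bool) \<Rightarrow> bool" where
  "conn_lf_graph E \<longleftrightarrow> (\<forall>u v. E u v \<longrightarrow> E v u) \<and> (\<forall>v. finite {w. E v w}) \<and> (\<forall>u v. E\<^sup>*\<^sup>* u v)"

text \<open>A BFS spanning tree of G rooted at r, oriented away from r, given by its parent map p:
  every v \<noteq> r is joined by a G-edge to its parent, which is one step closer to r in G.
  (The edges {v, p v} then form a spanning tree T with d_T(r,v) = d_G(r,v).)\<close>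
definition bfs_parent :: "('v \<Rightarrow> 'v \<Rightarrow> bool) \<Rightarrow> 'v \<Rightarrow> ('v \<Rightarrow> 'v) \<Rightarrow> bool" where
  "bfs_parent E r p \<longleftrightarrow> (\<forall>v. v \<noteq> r \<longrightarrow> E v (p v) \<and> gdist E r (p v) + 1 = gdist E r v)"

definition spread_init :: "'v \<Rightarrow> ('v \<Rightarrow> sv)" where
  "spread_init r = (\<lambda>v. if v = r then Plus else Bot)"

text \<open>Law of f_t(v) given f_{t-1} = f, for v \<noteq> r.\<close>
definition spread_vstep :: "real \<Rightarrow> real \<Rightarrow> ('v \<Rightarrow> 'v) \<Rightarrow> ('v \<Rightarrow> sv) \<Rightarrow> 'v \<Rightarrow> sv pmf" where
  "spread_vstep a b p f v =
     (if f v = Bot then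
        (if f (p v) = Bot then return_pmf Bot
         else map_pmf (\<lambda>c. if c then sv_neg (f (p v)) else f (p v)) (bernoulli_pmf a))
      else map_pmf (\<lambda>c. if c then f (p v) else f v) (bernoulli_pmf b))"

text \<open>One step: all non-root nodes update independently; nodes that are bottom with a
  bottom parent stay bottom (they form the default outside the finite set below).\<close>
definition spread_step :: "real \<Rightarrow> real \<Rightarrow> 'v \<Rightarrow> ('v \<Rightarrow> 'v) \<Rightarrow> ('v \<Rightarrow> sv) \<Rightarrow> ('v \<Rightarrow> sv) pmf" where
  "spread_step a b r p f =
     map_pmf (\<lambda>h. h(r := Plus))
       (Pi_pmf {v. v \<noteq> r \<and> (f v \<noteq> Bot \<or> f (p v) \<noteq> Bot)} Bot (spread_vstep a b p f))"

fun spread_traj :: "real \<Rightarrow> real \<Rightarrow> 'v \<Rightarrow> ('v \<Rightarrow> 'v) \<Rightarrow> nat \<Rightarrow> ('v \<Rightarrow> sv) list pmf" where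
  "spread_traj a b r p 0 = return_pmf [spread_init r]"
| "spread_traj a b r p (Suc n) =
     bind_pmf (spread_traj a b r p n)
       (\<lambda>fs. map_pmf (\<lambda>f. fs @ [f]) (spread_step a b r p (last fs)))"

text \<open>A state is (origin, zs): origin v = None encodes origin \<infinity>, origin v = Some k encodes
  origin k; zs = [Z_0, ..., Z_{count-1}], so count = length zs. The i.i.d. uniform labels
  Z_k are sampled (independently of everything) at the moment the counter reaches k.\<close>
type_synonym 'v dstate = "('v \<Rightarrow> nat option) \<times> sv list"

definition dec_g :: "'v dstate \<Rightarrow> 'v \<Rightarrow> sv" where
  "dec_g st v = (case fst st v of None \<Rightarrow> Bot | Some k \<Rightarrow> snd st ! k)"

definition dec_init :: "'v \<Rightarrow> 'v dstate" where
  "dec_init r = ((\<lambda>v. if v = r then Some 0 else None), [Plus])"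

definition unif_pm :: "sv pmf" where
  "unif_pm = pmf_of_set {Plus, Minus}"

text \<open>Sequential processing of the frontier nodes (listed in processing order);
  ori is origin_t, the state argument is the partially built (origin_{t+1}, zs).\<close>
fun dec_front :: "real \<Rightarrow> ('v \<Rightarrow> 'v) \<Rightarrow> ('v \<Rightarrow> nat option) \<Rightarrow> 'v list \<Rightarrow> 'v dstate \<Rightarrow> 'v dstate pmf" where
  "dec_front \<alpha> p ori [] st = return_pmf st"
| "dec_front \<alpha> p ori (v # vs) (new, zs) =
     bind_pmf (bernoulli_pmf \<alpha>) (\<lambda>c.
       if c then bind_pmf unif_pm (\<lambda>z. dec_front \<alpha> p ori vs (new(v := Some (length zs)), zs @ [z]))
       else dec_front \<alpha> p ori vs (new(v := ori (p v)), zs))"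

text \<open>One step; the frontier {v. g_t v = Bot \<noteq> g_t (p v)} is processed in increasing order of
  the injective key \<sigma>.\<close>
definition dec_step :: "real \<Rightarrow> real \<Rightarrow> 'v \<Rightarrow> ('v \<Rightarrow> 'v) \<Rightarrow> ('v \<Rightarrow> nat) \<Rightarrow> 'v dstate \<Rightarrow> 'v dstate pmf" where
  "dec_step \<alpha> \<beta> r p \<sigma> st =
     (let ori = fst st; zs = snd st; g = dec_g st;
          N = {v. v \<noteq> r \<and> g v \<noteq> Bot};
          F = {v. v \<noteq> r \<and> g v = Bot \<and> g (p v) \<noteq> Bot}
      in bind_pmf (Pi_pmf N None (\<lambda>v. map_pmf (\<lambda>c. if c then ori (p v) else ori v) (bernoulli_pmf \<beta>)))
           (\<lambda>old. dec_front \<alpha> p ori (sorted_key_list_of_set \<sigma> F)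
                    ((\<lambda>v. if v = r then Some 0 else if v \<in> N then old v else None), zs)))"

fun dec_traj :: "real \<Rightarrow> real \<Rightarrow> 'v \<Rightarrow> ('v \<Rightarrow> 'v) \<Rightarrow> ('v \<Rightarrow> nat) \<Rightarrow> nat \<Rightarrow> 'v dstate list pmf" where
  "dec_traj \<alpha> \<beta> r p \<sigma> 0 = return_pmf [dec_init r]"
| "dec_traj \<alpha> \<beta> r p \<sigma> (Suc n) =
     bind_pmf (dec_traj \<alpha> \<beta> r p \<sigma> n)
       (\<lambda>ds. map_pmf (\<lambda>d. ds @ [d]) (dec_step \<alpha> \<beta> r p \<sigma> (last ds)))"

end

theory Submission
  imports Defs
begin

(* Flipping the parent's sign with probability a has the same law as drawing, with
   probability 2a, a fresh uniform sign (which disagrees with the parent with probability 1/2)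
   and copying the parent's sign otherwise.  So if each newly reached node of the decoupled
   process opens a fresh label with probability 2a and otherwise inherits its parent's origin,
   its sign configuration g_t makes exactly the transitions of f_t: a fresh label is independent
   of everything drawn before, so the frontier nodes still update independently, and informed
   nodes copy their parent's origin exactly when the spread process copies the parent's sign.
   The coupling is the decoupled trajectory paired with its image under g. *)

definition flip_pmf :: "real \<Rightarrow> sv \<Rightarrow> sv pmf" where
  "flip_pmf a y = map_pmf (\<lambda>c. if c then sv_neg y else y) (bernoulli_pmf a)"

lemma flip_pmf_eq_resample:
  assumes "0 \<le> a" "a \<le> 1/2" "y \<noteq> Bot"
  shows "flip_pmf a y = bind_pmf (bernoulli_pmf (2*a)) (\<lambda>c. if c then unif_pm else return_pmf y)"
proof (rule pmf_eqI)
  fix x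
  have "card {Plus, Minus} = 2" by simp
  then show "pmf (flip_pmf a y) x =
      pmf (bind_pmf (bernoulli_pmf (2*a)) (\<lambda>c. if c then unif_pm else return_pmf y)) x"
    using assms unfolding flip_pmf_def map_pmf_def
    by (cases x; cases y; simp add: pmf_bind unif_pm_def indicator_def)
qed

fun dec_label :: "sv list \<Rightarrow> nat option \<Rightarrow> sv" where
  "dec_label zs None = Bot"
| "dec_label zs (Some k) = zs ! k"

lemma dec_g_Pair [simp]: "dec_g (ori, zs) v = dec_label zs (ori v)"
  by (simp add: dec_g_def split: option.split)

lemma dec_label_not_Bot: "dec_label zs x \<noteq> Bot \<Longrightarrow> x \<noteq> None"
  by (cases x) auto

definition valid_origins :: "('v \<Rightarrow> nat option) \<Rightarrow> sv list \<Rightarrow> bool" where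
  "valid_origins ori zs \<longleftrightarrow> (\<forall>v k. ori v = Some k \<longrightarrow> k < length zs)"

lemma valid_origins_fresh:
  "valid_origins new zs \<Longrightarrow> valid_origins (new(v := Some (length zs))) (zs @ [z])"
  by (auto simp: valid_origins_def intro: less_SucI)

lemma dec_g_fresh:
  assumes "valid_origins new zs"
  shows "dec_g (new(v := Some (length zs)), zs @ [z]) = (\<lambda>w. if w = v then z else dec_g (new, zs) w)"
proof
  show "dec_g (new(v := Some (length zs)), zs @ [z]) w = (if w = v then z else dec_g (new, zs) w)" for w
    using assms by (cases "new w") (auto simp: valid_origins_def nth_append)
qed

lemma dec_front_support:
  assumes "st' \<in> set_pmf (dec_front \<alpha> p ori vs (new, zs))"
    and "valid_origins new zs"
    and "\<forall>w\<in>set vs. \<forall>k. ori (p w) = Some k \<longrightarrow> k < length zs"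
  shows "(\<exists>zs'. snd st' = zs @ zs' \<and> set zs' \<subseteq> {Plus, Minus}) \<and>
         valid_origins (fst st') (snd st') \<and> (\<forall>w. w \<notin> set vs \<longrightarrow> fst st' w = new w)"
  using assms
proof (induction vs arbitrary: new zs)
  case Nil
  then show ?case by auto
next
  case (Cons v vs)
  from Cons.prems(1) consider
      z where "z \<in> {Plus, Minus}"
        "st' \<in> set_pmf (dec_front \<alpha> p ori vs (new(v := Some (length zs)), zs @ [z]))"
    | "st' \<in> set_pmf (dec_front \<alpha> p ori vs (new(v := ori (p v)), zs))"
    by (auto simp: unif_pm_def split: if_splits)
  then show ?case
  proof cases
    case (1 z)
    from Cons.IH[OF 1(2) valid_origins_fresh[OF Cons.prems(2)]] 1(1) Cons.prems(3)
    show ?thesis by fastforce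
  next
    case 2
    have "valid_origins (new(v := ori (p v))) zs"
      using Cons.prems(2,3) by (auto simp: valid_origins_def)
    from Cons.IH[OF 2 this] Cons.prems(3) show ?thesis by auto
  qed
qed

lemma bind_Pi_pmf_insert_override:
  assumes "finite A" "x \<notin> A"
  shows "bind_pmf (q x) (\<lambda>y. map_pmf (\<lambda>h w. if w \<in> A then h w else if w = x then y else g w) (Pi_pmf A d q))
       = map_pmf (\<lambda>h w. if w \<in> insert x A then h w else g w) (Pi_pmf (insert x A) d q)"
  unfolding Pi_pmf_insert'[OF assms] map_bind_pmf map_pmf_def[symmetric] map_pmf_comp
  by (intro bind_pmf_cong map_pmf_cong refl) (use assms(2) in \<open>auto simp: fun_eq_iff\<close>)

lemma map_dec_g_dec_front:
  assumes "distinct vs" "valid_origins new zs"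
    and "\<forall>v\<in>set vs. \<exists>k<length zs. ori (p v) = Some k \<and> zs ! k = G v"
    and "\<forall>v\<in>set vs. G v \<noteq> Bot" and "0 \<le> a" "a \<le> 1/2"
  shows "map_pmf dec_g (dec_front (2*a) p ori vs (new, zs)) =
         map_pmf (\<lambda>h w. if w \<in> set vs then h w else dec_g (new, zs) w)
           (Pi_pmf (set vs) Bot (\<lambda>v. flip_pmf a (G v)))"
  using assms(1-4)
proof (induction vs arbitrary: new zs)
  case Nil
  then show ?case by (simp add: fun_eq_iff)
next
  case (Cons v vs)
  obtain k where k: "k < length zs" "ori (p v) = Some k" "zs ! k = G v"
    using Cons.prems(3) by auto
  define K where "K y = map_pmf (\<lambda>h w. if w \<in> set vs then h w else if w = v then y else dec_g (new, zs) w)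
    (Pi_pmf (set vs) Bot (\<lambda>v. flip_pmf a (G v)))" for y
  have IH: "map_pmf dec_g (dec_front (2*a) p ori vs (new', zs @ ys)) =
      map_pmf (\<lambda>h w. if w \<in> set vs then h w else dec_g (new', zs @ ys) w)
        (Pi_pmf (set vs) Bot (\<lambda>v. flip_pmf a (G v)))"
    if "valid_origins new' (zs @ ys)" for new' ys
  proof (rule Cons.IH[OF _ that])
    show "\<forall>w\<in>set vs. \<exists>k<length (zs @ ys). ori (p w) = Some k \<and> (zs @ ys) ! k = G w"
      using Cons.prems(3) by (force simp: nth_append)
  qed (use Cons.prems(1,4) in auto)
  have fresh: "map_pmf dec_g (dec_front (2*a) p ori vs (new(v := Some (length zs)), zs @ [z])) = K z" for z
    using IH[OF valid_origins_fresh[OF Cons.prems(2), of v z]] unfolding dec_g_fresh[OF Cons.prems(2)] K_def .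
  have copied: "map_pmf dec_g (dec_front (2*a) p ori vs (new(v := ori (p v)), zs)) = K (G v)"
  proof -
    have relabel: "dec_g (new(v := ori (p v)), zs) = (\<lambda>w. if w = v then G v else dec_g (new, zs) w)"
      using k by auto
    have "valid_origins (new(v := ori (p v))) (zs @ [])"
      using Cons.prems(2) k by (auto simp: valid_origins_def)
    from IH[OF this] show ?thesis unfolding append_Nil2 relabel K_def .
  qed
  have "map_pmf dec_g (dec_front (2*a) p ori (v # vs) (new, zs)) =
     bind_pmf (bernoulli_pmf (2*a)) (\<lambda>c. if c then bind_pmf unif_pm K else K (G v))"
    by (simp add: map_bind_pmf fresh copied if_distrib cong: if_cong)
  also have "\<dots> = bind_pmf (bind_pmf (bernoulli_pmf (2*a)) (\<lambda>c. if c then unif_pm else return_pmf (G v))) K"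
    by (simp add: bind_assoc_pmf bind_return_pmf if_distrib[of "\<lambda>x. bind_pmf x K"] cong: if_cong)
  also have "\<dots> = bind_pmf (flip_pmf a (G v)) K"
    using flip_pmf_eq_resample assms(5,6) Cons.prems(4) by simp
  also have "\<dots> = map_pmf (\<lambda>h w. if w \<in> set (v # vs) then h w else dec_g (new, zs) w)
      (Pi_pmf (set (v # vs)) Bot (\<lambda>v. flip_pmf a (G v)))"
    unfolding K_def using bind_Pi_pmf_insert_override[of "set vs" v] Cons.prems(1) by simp
  finally show ?case .
qed

(* The facts of locale folding_insort_key are stated for linorder.sorted_key_list_of_set (\<le>),
   which is not syntactically the class constant used by dec_step. *)
lemma linorder_insort_key_eq: "linorder.insort_key (\<le>) = (insort_key :: ('b \<Rightarrow> 'a::linorder) \<Rightarrow> _)"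
proof (intro ext)
  fix f :: "'b \<Rightarrow> 'a" and x xs
  show "linorder.insort_key (\<le>) f x xs = insort_key f x xs"
    by (induction xs) (simp_all add: linorder.insort_key.simps[OF linorder_axioms])
qed

lemma linorder_sorted_key_list_of_set_eq:
  "linorder.sorted_key_list_of_set (\<le>) = (sorted_key_list_of_set :: ('b \<Rightarrow> 'a::linorder) \<Rightarrow> _)"
  by (intro ext) (simp add: linorder.sorted_key_list_of_set_def[OF linorder_axioms]
      sorted_key_list_of_set_def linorder_insort_key_eq)

lemma sorted_key_list_of_set_inj:
  fixes f :: "'b \<Rightarrow> 'a::linorder"
  assumes "inj f" "finite A"
  shows "set (sorted_key_list_of_set f A) = A" "distinct (sorted_key_list_of_set f A)"
proof -
  interpret folding_insort_key "(\<le>)" "(<)" UNIV f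
    using assms(1) by unfold_locales (rule inj_on_subset, auto)
  show "set (sorted_key_list_of_set f A) = A" "distinct (sorted_key_list_of_set f A)"
    using assms(2) set_sorted_key_list_of_set[of A] distinct_sorted_key_list_of_set[of A]
    by (simp_all add: linorder_sorted_key_list_of_set_eq distinct_map)
qed

definition informed_nodes :: "'v \<Rightarrow> ('v \<Rightarrow> sv) \<Rightarrow> 'v set" where
  "informed_nodes r f = {v. v \<noteq> r \<and> f v \<noteq> Bot}"

definition frontier_nodes :: "'v \<Rightarrow> ('v \<Rightarrow> 'v) \<Rightarrow> ('v \<Rightarrow> sv) \<Rightarrow> 'v set" where
  "frontier_nodes r p f = {v. v \<noteq> r \<and> f v = Bot \<and> f (p v) \<noteq> Bot}"

lemma finite_frontier_nodes:
  assumes "\<And>u. finite {v. v \<noteq> r \<and> p v = u}" "finite {v. f v \<noteq> Bot}"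
  shows "finite (frontier_nodes r p f)"
proof (rule finite_subset)
  show "frontier_nodes r p f \<subseteq> (\<Union>u\<in>{v. f v \<noteq> Bot}. {v. v \<noteq> r \<and> p v = u})"
    by (auto simp: frontier_nodes_def)
qed (use assms in blast)

lemma spread_step_split:
  assumes "finite (informed_nodes r f)" "finite (frontier_nodes r p f)"
  shows "spread_step a b r p f =
    map_pmf (\<lambda>(h, h') w. if w = r then Plus else if w \<in> informed_nodes r f then h w else h' w)
      (pair_pmf (Pi_pmf (informed_nodes r f) Bot (spread_vstep a b p f))
                (Pi_pmf (frontier_nodes r p f) Bot (\<lambda>v. flip_pmf a (f (p v)))))"
proof -
  have nodes: "{v. v \<noteq> r \<and> (f v \<noteq> Bot \<or> f (p v) \<noteq> Bot)} = informed_nodes r f \<union> frontier_nodes r p f"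
    by (auto simp: informed_nodes_def frontier_nodes_def)
  have disjoint: "informed_nodes r f \<inter> frontier_nodes r p f = {}"
    by (auto simp: informed_nodes_def frontier_nodes_def)
  have flips: "Pi_pmf (frontier_nodes r p f) Bot (spread_vstep a b p f) =
      Pi_pmf (frontier_nodes r p f) Bot (\<lambda>v. flip_pmf a (f (p v)))"
    by (rule Pi_pmf_cong) (auto simp: frontier_nodes_def spread_vstep_def flip_pmf_def)
  show ?thesis
    unfolding spread_step_def nodes Pi_pmf_union[OF assms disjoint] flips map_pmf_comp
    by (intro map_pmf_cong) auto
qed

fun dec_wf :: "'v \<Rightarrow> 'v dstate \<Rightarrow> bool" where
  "dec_wf r (ori, zs) \<longleftrightarrow> ori r = Some 0 \<and> zs ! 0 = Plus \<and> set zs \<subseteq> {Plus, Minus} \<and>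
     valid_origins ori zs \<and> finite {v. ori v \<noteq> None}"

lemma dec_wf_init: "dec_wf r (dec_init r)"
  by (simp add: dec_init_def valid_origins_def)

lemma finite_dec_g_support:
  assumes "dec_wf r (ori, zs)"
  shows "finite {v. dec_g (ori, zs) v \<noteq> Bot}"
  by (rule finite_subset[of _ "{v. ori v \<noteq> None}"]) (use assms in \<open>auto dest: dec_label_not_Bot\<close>)

definition copy_parent_pmf :: "real \<Rightarrow> ('v \<Rightarrow> 'v) \<Rightarrow> ('v \<Rightarrow> nat option) \<Rightarrow> 'v \<Rightarrow> nat option pmf" where
  "copy_parent_pmf \<beta> p ori v = map_pmf (\<lambda>c. if c then ori (p v) else ori v) (bernoulli_pmf \<beta>)"

definition restart_origins :: "'v \<Rightarrow> 'v set \<Rightarrow> ('v \<Rightarrow> nat option) \<Rightarrow> 'v \<Rightarrow> nat option" where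
  "restart_origins r N old = (\<lambda>v. if v = r then Some 0 else if v \<in> N then old v else None)"

lemma dec_step_Pair:
  "dec_step \<alpha> \<beta> r p \<sigma> (ori, zs) =
     bind_pmf (Pi_pmf (informed_nodes r (dec_g (ori, zs))) None (copy_parent_pmf \<beta> p ori))
       (\<lambda>old. dec_front \<alpha> p ori (sorted_key_list_of_set \<sigma> (frontier_nodes r p (dec_g (ori, zs))))
          (restart_origins r (informed_nodes r (dec_g (ori, zs))) old, zs))"
  unfolding dec_step_def Let_def informed_nodes_def frontier_nodes_def copy_parent_pmf_def
    restart_origins_def fst_conv snd_conv ..

lemma valid_restart_origins:
  assumes "dec_wf r (ori, zs)" "finite N" "old \<in> set_pmf (Pi_pmf N None (copy_parent_pmf \<beta> p ori))"
  shows "valid_origins (restart_origins r N old) zs"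
proof -
  have "old v = ori (p v) \<or> old v = ori v" if "v \<in> N" for v
    using set_Pi_pmf_subset'[OF assms(2)] assms(3) that
    by (fastforce simp: PiE_dflt_def copy_parent_pmf_def)
  with assms(1) show ?thesis by (fastforce simp: valid_origins_def restart_origins_def)
qed

lemma Pi_pmf_spread_vstep_relabel:
  assumes "finite N" "\<forall>v\<in>N. dec_g (ori, zs) v \<noteq> Bot"
  shows "Pi_pmf N Bot (spread_vstep a b p (dec_g (ori, zs))) =
    map_pmf (\<lambda>old. dec_label zs \<circ> old) (Pi_pmf N None (copy_parent_pmf b p ori))"
proof -
  have "Pi_pmf N Bot (spread_vstep a b p (dec_g (ori, zs))) =
      Pi_pmf N Bot (\<lambda>v. map_pmf (dec_label zs) (copy_parent_pmf b p ori v))"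
    by (rule Pi_pmf_cong)
      (use assms(2) in \<open>auto simp: spread_vstep_def copy_parent_pmf_def map_pmf_comp intro!: map_pmf_cong\<close>)
  also have "\<dots> = map_pmf (\<lambda>old. dec_label zs \<circ> old) (Pi_pmf N None (copy_parent_pmf b p ori))"
    by (rule Pi_pmf_map) (simp_all add: assms(1))
  finally show ?thesis .
qed

context
  fixes r :: 'v and p :: "'v \<Rightarrow> 'v" and \<sigma> :: "'v \<Rightarrow> nat"
  assumes finite_children: "\<And>u. finite {v. v \<noteq> r \<and> p v = u}" and inj_key: "inj \<sigma>"
begin

lemma finite_dec_nodes:
  assumes "dec_wf r (ori, zs)"
  shows "finite (informed_nodes r (dec_g (ori, zs)))" "finite (frontier_nodes r p (dec_g (ori, zs)))"
proof -
  have "informed_nodes r (dec_g (ori, zs)) \<subseteq> {v. dec_g (ori, zs) v \<noteq> Bot}"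
    by (auto simp: informed_nodes_def)
  then show "finite (informed_nodes r (dec_g (ori, zs)))"
    using finite_dec_g_support[OF assms] by (rule finite_subset)
  show "finite (frontier_nodes r p (dec_g (ori, zs)))"
    using finite_children finite_dec_g_support[OF assms] by (rule finite_frontier_nodes)
qed

lemma map_dec_g_dec_front_frontier:
  assumes wf: "dec_wf r (ori, zs)"
    and N: "N = informed_nodes r (dec_g (ori, zs))" and F: "F = frontier_nodes r p (dec_g (ori, zs))"
    and old: "old \<in> set_pmf (Pi_pmf N None (copy_parent_pmf \<beta> p ori))" and "0 \<le> a" "a \<le> 1/2"
  shows "map_pmf dec_g (dec_front (2*a) p ori (sorted_key_list_of_set \<sigma> F) (restart_origins r N old, zs)) =
    map_pmf (\<lambda>h w. if w = r then Plus else if w \<in> N then dec_label zs (old w) else h w)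
      (Pi_pmf F Bot (\<lambda>v. flip_pmf a (dec_g (ori, zs) (p v))))"
proof -
  have fin: "finite N" "finite F"
    using finite_dec_nodes[OF wf] by (simp_all add: N F)
  note order = sorted_key_list_of_set_inj[OF inj_key fin(2)]
  have parent_label: "\<exists>k<length zs. ori (p v) = Some k \<and> zs ! k = dec_g (ori, zs) (p v)"
    and parent_informed: "dec_g (ori, zs) (p v) \<noteq> Bot" if "v \<in> F" for v
  proof -
    show "dec_g (ori, zs) (p v) \<noteq> Bot" using that by (simp add: F frontier_nodes_def)
    then obtain k where "ori (p v) = Some k" by (auto dest: dec_label_not_Bot)
    with wf show "\<exists>k<length zs. ori (p v) = Some k \<and> zs ! k = dec_g (ori, zs) (p v)"
      by (auto simp: valid_origins_def)
  qed
  have "map_pmf dec_g (dec_front (2*a) p ori (sorted_key_list_of_set \<sigma> F) (restart_origins r N old, zs)) =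
      map_pmf (\<lambda>h w. if w \<in> set (sorted_key_list_of_set \<sigma> F) then h w else dec_g (restart_origins r N old, zs) w)
        (Pi_pmf (set (sorted_key_list_of_set \<sigma> F)) Bot (\<lambda>v. flip_pmf a (dec_g (ori, zs) (p v))))"
  proof (rule map_dec_g_dec_front[OF _ _ _ _ assms(5,6)])
    show "valid_origins (restart_origins r N old) zs"
      using valid_restart_origins[OF wf fin(1) old] .
  qed (use parent_label parent_informed in \<open>simp_all add: order\<close>)
  also have "\<dots> = map_pmf (\<lambda>h w. if w \<in> F then h w else dec_g (restart_origins r N old, zs) w)
      (Pi_pmf F Bot (\<lambda>v. flip_pmf a (dec_g (ori, zs) (p v))))"
    unfolding order(1) ..
  also have "\<dots> = map_pmf (\<lambda>h w. if w = r then Plus else if w \<in> N then dec_label zs (old w) else h w)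
      (Pi_pmf F Bot (\<lambda>v. flip_pmf a (dec_g (ori, zs) (p v))))"
  proof (rule map_pmf_cong[OF refl])
    fix h assume "h \<in> set_pmf (Pi_pmf F Bot (\<lambda>v. flip_pmf a (dec_g (ori, zs) (p v))))"
    then have "h w = Bot" if "w \<notin> F" for w
      using set_Pi_pmf_subset[OF fin(2), of Bot] that by auto
    moreover have "old w = None" if "w \<notin> N" for w
      using set_Pi_pmf_subset[OF fin(1), of None "copy_parent_pmf \<beta> p ori"] old that by auto
    moreover have "N \<inter> F = {}" "r \<notin> F"
      by (auto simp: N F informed_nodes_def frontier_nodes_def)
    ultimately show "(\<lambda>w. if w \<in> F then h w else dec_g (restart_origins r N old, zs) w) =
        (\<lambda>w. if w = r then Plus else if w \<in> N then dec_label zs (old w) else h w)"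
      using wf unfolding restart_origins_def by (intro ext) (simp, metis disjoint_iff)
  qed
  finally show ?thesis .
qed

lemma map_dec_g_dec_step:
  assumes wf: "dec_wf r (ori, zs)" and "0 \<le> a" "a \<le> 1/2"
  shows "map_pmf dec_g (dec_step (2*a) b r p \<sigma> (ori, zs)) = spread_step a b r p (dec_g (ori, zs))"
proof -
  define g where "g = dec_g (ori, zs)"
  define N where "N = informed_nodes r g"
  define F where "F = frontier_nodes r p g"
  define PN where "PN = Pi_pmf N None (copy_parent_pmf b p ori)"
  define PF where "PF = Pi_pmf F Bot (\<lambda>v. flip_pmf a (g (p v)))"
  define merge :: "('v \<Rightarrow> sv) \<times> ('v \<Rightarrow> sv) \<Rightarrow> 'v \<Rightarrow> sv"
    where "merge = (\<lambda>(h, h') w. if w = r then Plus else if w \<in> N then h w else h' w)"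
  have fin: "finite N" "finite F"
    using finite_dec_nodes[OF wf] by (simp_all add: N_def F_def g_def)
  have "map_pmf dec_g (dec_step (2*a) b r p \<sigma> (ori, zs)) =
      bind_pmf PN (\<lambda>old. map_pmf dec_g (dec_front (2*a) p ori (sorted_key_list_of_set \<sigma> F) (restart_origins r N old, zs)))"
    unfolding dec_step_Pair map_bind_pmf by (simp only: PN_def N_def F_def g_def)
  also have "\<dots> = bind_pmf PN (\<lambda>old. map_pmf (\<lambda>h. merge (dec_label zs \<circ> old, h)) PF)"
    using map_dec_g_dec_front_frontier[OF wf N_def[unfolded g_def] F_def[unfolded g_def] _ assms(2,3)]
    by (intro bind_pmf_cong refl) (simp add: PN_def PF_def merge_def g_def comp_def)
  also have "\<dots> = map_pmf merge (pair_pmf (map_pmf (\<lambda>old. dec_label zs \<circ> old) PN) PF)"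
    by (simp add: pair_pmf_def map_bind_pmf bind_map_pmf map_pmf_def bind_assoc_pmf bind_return_pmf)
  also have "\<dots> = map_pmf merge (pair_pmf (Pi_pmf N Bot (spread_vstep a b p g)) PF)"
  proof -
    have "\<forall>v\<in>N. dec_g (ori, zs) v \<noteq> Bot"
      by (simp add: N_def g_def informed_nodes_def)
    from Pi_pmf_spread_vstep_relabel[OF fin(1) this] show ?thesis
      by (simp only: PN_def g_def)
  qed
  also have "\<dots> = spread_step a b r p g"
    unfolding spread_step_split[OF fin[unfolded N_def F_def]] merge_def PF_def N_def F_def ..
  finally show ?thesis by (simp only: g_def)
qed

lemma dec_step_preserves_wf:
  assumes wf: "dec_wf r (ori, zs)" and "(ori', zs') \<in> set_pmf (dec_step \<alpha> \<beta> r p \<sigma> (ori, zs))"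
  shows "dec_wf r (ori', zs')"
proof -
  define N where "N = informed_nodes r (dec_g (ori, zs))"
  define F where "F = frontier_nodes r p (dec_g (ori, zs))"
  have fin: "finite N" "finite F"
    using finite_dec_nodes[OF wf] by (simp_all add: N_def F_def)
  from assms(2) obtain old where old: "old \<in> set_pmf (Pi_pmf N None (copy_parent_pmf \<beta> p ori))"
    and front: "(ori', zs') \<in> set_pmf (dec_front \<alpha> p ori (sorted_key_list_of_set \<sigma> F)
      (restart_origins r N old, zs))"
    unfolding dec_step_Pair N_def F_def by auto
  have "\<forall>w\<in>set (sorted_key_list_of_set \<sigma> F). \<forall>k. ori (p w) = Some k \<longrightarrow> k < length zs"
    using wf by (simp add: valid_origins_def)
  from dec_front_support[OF front valid_restart_origins[OF wf fin(1) old] this]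
  obtain new where zs': "zs' = zs @ new" "set new \<subseteq> {Plus, Minus}"
    and valid: "valid_origins ori' zs'"
    and outside: "\<And>w. w \<notin> F \<Longrightarrow> ori' w = restart_origins r N old w"
    using sorted_key_list_of_set_inj(1)[OF inj_key fin(2)] by auto
  have "r \<notin> F" by (simp add: F_def frontier_nodes_def)
  with outside have root: "ori' r = Some 0" by (simp add: restart_origins_def)
  have "zs \<noteq> []" using wf by (auto simp: valid_origins_def)
  with wf zs'(1) have head: "zs' ! 0 = Plus" by (simp add: nth_append)
  have "finite {v. ori' v \<noteq> None}"
  proof (rule finite_subset)
    show "{v. ori' v \<noteq> None} \<subseteq> insert r (N \<union> F)"
      using outside by (force simp: restart_origins_def split: if_splits)
  qed (use fin in simp)
  with root head wf zs' valid show ?thesis by auto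
qed

lemma dec_traj_wf:
  assumes "ds \<in> set_pmf (dec_traj \<alpha> \<beta> r p \<sigma> n)"
  shows "length ds = Suc n \<and> dec_wf r (last ds)"
  using assms
proof (induction n arbitrary: ds)
  case 0
  then show ?case by (simp add: dec_wf_init)
next
  case (Suc n)
  then obtain ds0 st' where ds0: "ds0 \<in> set_pmf (dec_traj \<alpha> \<beta> r p \<sigma> n)"
    and st': "st' \<in> set_pmf (dec_step \<alpha> \<beta> r p \<sigma> (last ds0))" and ds: "ds = ds0 @ [st']"
    by auto
  obtain ori zs where last: "last ds0 = (ori, zs)" by fastforce
  obtain ori' zs' where st'_eq: "st' = (ori', zs')" by fastforce
  have "dec_wf r (ori', zs')"
    using dec_step_preserves_wf Suc.IH[OF ds0] st' unfolding last st'_eq by blast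
  with Suc.IH[OF ds0] show ?case by (simp add: ds st'_eq)
qed

lemma map_dec_g_dec_traj:
  assumes "0 \<le> a" "a \<le> 1/2"
  shows "map_pmf (map dec_g) (dec_traj (2*a) b r p \<sigma> n) = spread_traj a b r p n"
proof (induction n)
  case 0
  show ?case by (simp add: dec_init_def spread_init_def fun_eq_iff)
next
  case (Suc n)
  have step: "map_pmf (\<lambda>f. map dec_g ds @ [f]) (map_pmf dec_g (dec_step (2*a) b r p \<sigma> (last ds))) =
      map_pmf (\<lambda>f. map dec_g ds @ [f]) (spread_step a b r p (last (map dec_g ds)))"
    if "ds \<in> set_pmf (dec_traj (2*a) b r p \<sigma> n)" for ds
  proof -
    obtain ori zs where last: "last ds = (ori, zs)" by fastforce
    have "ds \<noteq> []" "dec_wf r (ori, zs)" using dec_traj_wf[OF that] last by auto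
    with map_dec_g_dec_step[OF _ assms] show ?thesis by (simp add: last_map last)
  qed
  have "map_pmf (map dec_g) (dec_traj (2*a) b r p \<sigma> (Suc n)) =
      bind_pmf (dec_traj (2*a) b r p \<sigma> n)
        (\<lambda>ds. map_pmf (\<lambda>f. map dec_g ds @ [f]) (map_pmf dec_g (dec_step (2*a) b r p \<sigma> (last ds))))"
    by (simp add: map_bind_pmf map_pmf_comp)
  also have "\<dots> = bind_pmf (map_pmf (map dec_g) (dec_traj (2*a) b r p \<sigma> n))
      (\<lambda>fs. map_pmf (\<lambda>f. fs @ [f]) (spread_step a b r p (last fs)))"
    unfolding bind_map_pmf by (intro bind_pmf_cong refl step)
  also have "\<dots> = spread_traj a b r p (Suc n)"
    by (simp add: Suc.IH)
  finally show ?case .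
qed

lemma dec_traj_coupling:
  fixes a b :: real and n :: nat
  assumes "0 \<le> a" "a \<le> 1/2"
  defines "\<mu> \<equiv> map_pmf (\<lambda>ds. (map dec_g ds, ds)) (dec_traj (2*a) b r p \<sigma> n)"
  shows "map_pmf fst \<mu> = spread_traj a b r p n" and "map_pmf snd \<mu> = dec_traj (2*a) b r p \<sigma> n"
    and "\<forall>(fs, ds) \<in> set_pmf \<mu>. \<forall>t \<le> n. \<forall>v. dec_g (ds ! t) v = (fs ! t) v"
  using map_dec_g_dec_traj[OF assms(1,2)] dec_traj_wf by (auto simp: \<mu>_def map_pmf_comp)

end

lemma finite_children_bfs:
  assumes "conn_lf_graph E" "bfs_parent E r p"
  shows "finite {v. v \<noteq> r \<and> p v = u}"
proof (rule finite_subset)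
  show "{v. v \<noteq> r \<and> p v = u} \<subseteq> {w. E u w}"
    using assms unfolding conn_lf_graph_def bfs_parent_def by blast
  show "finite {w. E u w}"
    using assms(1) unfolding conn_lf_graph_def by blast
qed

theorem mainTheorem3:
  fixes E :: "'v \<Rightarrow> 'v \<Rightarrow> bool" and r :: 'v and p :: "'v \<Rightarrow> 'v"
    and \<sigma> :: "'v \<Rightarrow> nat" and a b :: real
  assumes "conn_lf_graph E"
    and "bfs_parent E r p"
    and "inj \<sigma>"
    and "0 \<le> a" and "a \<le> 1/2" and "0 \<le> b" and "b \<le> 1"
  shows "\<forall>n. \<exists>\<mu> :: (('v \<Rightarrow> sv) list \<times> 'v dstate list) pmf.
           map_pmf fst \<mu> = spread_traj a b r p n \<and>
           map_pmf snd \<mu> = dec_traj (2 * a) b r p \<sigma> n \<and>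
           (\<forall>(fs, ds) \<in> set_pmf \<mu>. \<forall>t \<le> n. \<forall>v. dec_g (ds ! t) v = (fs ! t) v)"
  using dec_traj_coupling[OF finite_children_bfs[OF assms(1,2)] assms(3-5)] by blast

end
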